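(* Let $\Omega\subset\mathbb R^n$ be a bounded domain, $\alpha<0$, and $\varphi:\partial\Omega\to\mathbb R$ positive. Then there is at most one positive solution $u\in C^2(\Omega)\cap C^0(\overline\Omega)$ of $$\mathrm{div}\left(\frac{Du}{\sqrt{1-|Du|^2}}\right)=\frac{\alpha}{u\sqrt{1-|Du|^2}}\ \text{ in }\Omega,\qquad u=\varphi\ \text{ on }\partial\Omega,\qquad |Du|<1\ \text{ in }\overline\Omega.$$ *)

theory Defs
  imports "HOL-Analysis.Analysis"
begin

definition grad :: "('a::euclidean_space \<Rightarrow> real) \<Rightarrow> 'a \<Rightarrow> 'a" where
  "grad u x = (\<Sum>i\<in>Basis. frechet_derivative u (at x) i *\<^sub>R i)"

definition divergence :: "('a::euclidean_space \<Rightarrow> 'a) \<Rightarrow> 'a \<Rightarrow> real" where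
  "divergence F x = (\<Sum>i\<in>Basis. frechet_derivative F (at x) i \<bullet> i)"

definition C2_on :: "'a::euclidean_space set \<Rightarrow> ('a \<Rightarrow> real) \<Rightarrow> bool" where
  "C2_on \<Omega> u \<longleftrightarrow>
     (\<forall>x\<in>\<Omega>. u differentiable (at x) \<and> grad u differentiable (at x)) \<and>
     (\<forall>i\<in>Basis. \<forall>j\<in>Basis.
        continuous_on \<Omega> (\<lambda>x. frechet_derivative (grad u) (at x) i \<bullet> j))"

definition is_pos_solution ::
  "'a::euclidean_space set \<Rightarrow> real \<Rightarrow> ('a \<Rightarrow> real) \<Rightarrow> ('a \<Rightarrow> real) \<Rightarrow> bool" where
  "is_pos_solution \<Omega> \<alpha> \<phi> u \<longleftrightarrow>
     C2_on \<Omega> u \<and> continuous_on (closure \<Omega>) u \<and>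
     (\<forall>x\<in>\<Omega>. u x > 0) \<and>
     (\<forall>x\<in>\<Omega>. norm (grad u x) < 1) \<and>
     (\<forall>x\<in>\<Omega>. divergence (\<lambda>y. grad u y /\<^sub>R sqrt (1 - (norm (grad u y))\<^sup>2)) x
               = \<alpha> / (u x * sqrt (1 - (norm (grad u x))\<^sup>2))) \<and>
     (\<forall>x\<in>frontier \<Omega>. u x = \<phi> x)"

end

theory Submission
  imports Defs
begin

text \<open>The proof is a comparison principle. If u - v had a positive maximum, it would be
attained at an interior point x0, where Du = Dv and the Hessians satisfy D2u \<le> D2v. In
non-divergence form the equation reads tr D2u + Du \<bullet> D2u Du / (1 - |Du|^2) = \<alpha> / u, whose
left-hand side is monotone in D2u; hence \<alpha> / u x0 \<le> \<alpha> / v x0, which contradicts u x0 > v x0 because \<alpha> < 0.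
Exchanging u and v gives uniqueness.\<close>

lemma sum_Basis_scaleR_inner:
  fixes L :: "'a::euclidean_space \<Rightarrow> real"
  assumes "linear L"
  shows "(\<Sum>i\<in>Basis. L i *\<^sub>R i) \<bullet> h = L h"
proof -
  have "(\<Sum>i\<in>Basis. L i *\<^sub>R i) \<bullet> h = (\<Sum>i\<in>Basis. (h \<bullet> i) * L i)"
    by (simp add: inner_sum_right inner_commute mult.commute)
  also have "\<dots> = L (\<Sum>i\<in>Basis. (h \<bullet> i) *\<^sub>R i)"
    using assms by (simp add: linear_sum linear_scale)
  finally show ?thesis by (simp add: euclidean_representation)
qed

lemma has_derivative_grad:
  assumes "u differentiable (at x)"
  shows "(u has_derivative (\<lambda>h. grad u x \<bullet> h)) (at x)"
proof -
  have "(u has_derivative frechet_derivative u (at x)) (at x)"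
    using assms frechet_derivative_works by blast
  moreover have "frechet_derivative u (at x) = (\<lambda>h. grad u x \<bullet> h)"
    using has_derivative_linear[OF calculation] by (simp add: grad_def sum_Basis_scaleR_inner)
  ultimately show ?thesis by simp
qed

lemma has_derivative_div_sqrt_1_minus_norm2:
  fixes G :: "'a::real_inner \<Rightarrow> 'b::real_inner"
  assumes G: "(G has_derivative G') (at x)" and "norm (G x) < 1"
  defines "S \<equiv> 1 - (norm (G x))\<^sup>2"
  shows "((\<lambda>y. G y /\<^sub>R sqrt (1 - (norm (G y))\<^sup>2)) has_derivative
           (\<lambda>h. G' h /\<^sub>R sqrt S + ((G x \<bullet> G' h) / sqrt S ^ 3) *\<^sub>R G x)) (at x)"
proof -
  have S: "S > 0"
    using assms(2) by (simp add: S_def abs_square_less_1)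
  have "((\<lambda>y. 1 - (norm (G y))\<^sup>2) has_derivative (\<lambda>h. - (2 * (G x \<bullet> G' h)))) (at x)"
    unfolding power2_norm_eq_inner
    by (rule derivative_eq_intros refl G | simp add: inner_commute)+
  from DERIV_compose_FDERIV[OF DERIV_real_sqrt[OF S, unfolded S_def] this]
  have "((\<lambda>y. sqrt (1 - (norm (G y))\<^sup>2)) has_derivative (\<lambda>h. - (G x \<bullet> G' h) / sqrt S)) (at x)"
    by (simp add: S_def field_simps)
  from Deriv.has_derivative_inverse[OF _ this]
  have "((\<lambda>y. inverse (sqrt (1 - (norm (G y))\<^sup>2))) has_derivative
          (\<lambda>h. (G x \<bullet> G' h) / sqrt S ^ 3)) (at x)"
    using S by (simp add: S_def power3_eq_cube field_simps)
  from has_derivative_scaleR[OF this G] show ?thesis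
    by (simp add: S_def divide_inverse_commute add.commute)
qed

lemma divergence_div_sqrt_1_minus_norm2_grad:
  fixes u :: "'a::euclidean_space \<Rightarrow> real"
  assumes "grad u differentiable (at x)" and "norm (grad u x) < 1"
  defines "p \<equiv> grad u x" and "H \<equiv> frechet_derivative (grad u) (at x)"
    and "S \<equiv> 1 - (norm (grad u x))\<^sup>2"
  shows "divergence (\<lambda>y. grad u y /\<^sub>R sqrt (1 - (norm (grad u y))\<^sup>2)) x
         = ((\<Sum>i\<in>Basis. H i \<bullet> i) + (p \<bullet> H p) / S) / sqrt S"
proof -
  have H: "(grad u has_derivative H) (at x)"
    using assms(1) frechet_derivative_works H_def by blast
  have S: "S > 0"
    using assms(2) by (simp add: S_def abs_square_less_1)
  have "(\<Sum>i\<in>Basis. (p \<bullet> H i) * (p \<bullet> i)) = p \<bullet> H (\<Sum>i\<in>Basis. (p \<bullet> i) *\<^sub>R i)"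
    using has_derivative_linear[OF H]
    by (simp add: linear_sum linear_scale inner_sum_right mult.commute)
  then have quad: "(\<Sum>i\<in>Basis. (p \<bullet> H i) * (p \<bullet> i)) = p \<bullet> H p"
    by (simp add: euclidean_representation)
  have "divergence (\<lambda>y. grad u y /\<^sub>R sqrt (1 - (norm (grad u y))\<^sup>2)) x
        = (\<Sum>i\<in>Basis. (H i \<bullet> i) / sqrt S + (p \<bullet> H i) * (p \<bullet> i) / sqrt S ^ 3)"
    unfolding divergence_def
      frechet_derivative_at[OF has_derivative_div_sqrt_1_minus_norm2[OF H assms(2)], symmetric]
    by (simp add: p_def S_def inner_add_left divide_inverse mult_ac)
  also have "\<dots> = (\<Sum>i\<in>Basis. H i \<bullet> i) / sqrt S + (p \<bullet> H p) / sqrt S ^ 3"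
    by (simp add: sum.distrib sum_divide_distrib[symmetric] quad)
  also have "\<dots> = ((\<Sum>i\<in>Basis. H i \<bullet> i) + (p \<bullet> H p) / S) / sqrt S"
    using S by (simp add: field_simps power3_eq_cube)
  finally show ?thesis .
qed

lemma mean_curvature_operator_mono:
  fixes H K :: "'a::euclidean_space \<Rightarrow> 'a"
  assumes "\<And>h. H h \<bullet> h \<le> K h \<bullet> h" and "S > 0"
  shows "((\<Sum>i\<in>Basis. H i \<bullet> i) + (p \<bullet> H p) / S) / sqrt S
         \<le> ((\<Sum>i\<in>Basis. K i \<bullet> i) + (p \<bullet> K p) / S) / sqrt S"
  using assms by (intro divide_right_mono add_mono sum_mono) (auto simp: inner_commute)

lemma real_second_derivative_nonpos_at_left_max:
  fixes g g' :: "real \<Rightarrow> real"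
  assumes "\<delta> > 0" and g: "\<And>t. t \<in> {0..\<delta>} \<Longrightarrow> (g has_real_derivative g' t) (at t)"
    and "g' 0 = 0" and g': "(g' has_real_derivative c) (at 0)"
    and max: "\<And>t. t \<in> {0..\<delta>} \<Longrightarrow> g t \<le> g 0"
  shows "c \<le> 0"
proof (rule ccontr)
  assume "\<not> c \<le> 0"
  from DERIV_pos_inc_right[OF g'] this
  obtain d where "d > 0" and inc: "\<And>h. 0 < h \<Longrightarrow> h < d \<Longrightarrow> g' 0 < g' h"
    by auto
  define t where "t = min d \<delta> / 2"
  have t: "0 < t" "t < d" "t \<le> \<delta>"
    using \<open>d > 0\<close> \<open>\<delta> > 0\<close> by (auto simp: t_def)
  obtain z where "0 < z" "z < t" "g t - g 0 = t * g' z"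
    using MVT2[of 0 t g g'] t g by auto
  moreover have "g' z > 0"
    using inc[of z] \<open>0 < z\<close> \<open>z < t\<close> t \<open>g' 0 = 0\<close> by simp
  ultimately have "g t > g 0"
    using t by (simp add: algebra_simps)
  with max[of t] t show False by simp
qed

lemma local_max_gradient_eq_0:
  fixes w :: "'a::real_inner \<Rightarrow> real"
  assumes "open \<Omega>" and "x0 \<in> \<Omega>" and "(w has_derivative (\<lambda>h. p \<bullet> h)) (at x0)"
    and "\<And>y. y \<in> \<Omega> \<Longrightarrow> w y \<le> w x0"
  shows "p = 0"
proof -
  have "(\<lambda>h. p \<bullet> h) = (\<lambda>h. 0)"
    by (rule differential_zero_maxmin[OF assms(2,1,3)]) (use assms(4) in auto)
  then show ?thesis
    by (metis inner_eq_zero_iff)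
qed

lemma local_max_second_derivative_nonpos:
  fixes w :: "'a::real_inner \<Rightarrow> real"
  assumes "open \<Omega>" and "x0 \<in> \<Omega>"
    and w: "\<And>y. y \<in> \<Omega> \<Longrightarrow> (w has_derivative (\<lambda>h. F y \<bullet> h)) (at y)"
    and F: "(F has_derivative F') (at x0)"
    and max: "\<And>y. y \<in> \<Omega> \<Longrightarrow> w y \<le> w x0"
  shows "F' h \<bullet> h \<le> 0"
proof -
  have line: "((\<lambda>t::real. x0 + t *\<^sub>R h) has_derivative (\<lambda>s. s *\<^sub>R h)) (at t)" for t
    by (rule derivative_eq_intros refl | simp)+
  have "((\<lambda>t::real. x0 + t *\<^sub>R h) \<longlongrightarrow> x0 + 0 *\<^sub>R h) (nhds 0)"
    by (intro tendsto_intros filterlim_ident)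
  from topological_tendstoD[OF this \<open>open \<Omega>\<close>] \<open>x0 \<in> \<Omega>\<close>
  obtain \<epsilon> where "\<epsilon> > 0" and \<epsilon>: "\<And>t. dist t 0 < \<epsilon> \<Longrightarrow> x0 + t *\<^sub>R h \<in> \<Omega>"
    by (auto simp: eventually_nhds_metric)
  define \<delta> where "\<delta> = \<epsilon> / 2"
  have "\<delta> > 0"
    using \<open>\<epsilon> > 0\<close> by (simp add: \<delta>_def)
  have line_in: "x0 + t *\<^sub>R h \<in> \<Omega>" if "t \<in> {0..\<delta>}" for t
    using that \<epsilon> \<open>\<epsilon> > 0\<close> by (simp add: \<delta>_def)
  have "F x0 = 0"
    using local_max_gradient_eq_0[OF assms(1,2) w[OF \<open>x0 \<in> \<Omega>\<close>] max] .
  have dg: "((\<lambda>t. w (x0 + t *\<^sub>R h)) has_real_derivative F (x0 + t *\<^sub>R h) \<bullet> h) (at t)"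
    if "t \<in> {0..\<delta>}" for t
    using has_derivative_compose[OF line w[OF line_in[OF that]]]
    by (simp add: has_field_derivative_def mult_commute_abs)
  have dg': "((\<lambda>t. F (x0 + t *\<^sub>R h) \<bullet> h) has_real_derivative F' h \<bullet> h) (at 0)"
    using has_derivative_inner_left[OF has_derivative_compose[OF line, of F F' 0]] F
      linear_scale[OF has_derivative_linear[OF F]]
    by (simp add: has_field_derivative_def mult_commute_abs)
  show ?thesis
    using real_second_derivative_nonpos_at_left_max[OF \<open>\<delta> > 0\<close> dg _ dg'] line_in max \<open>F x0 = 0\<close>
    by auto
qed

lemma pos_solutions_at_interior_max:
  fixes \<Omega> :: "'a::euclidean_space set"
  assumes "open \<Omega>" and "x0 \<in> \<Omega>"
    and u: "is_pos_solution \<Omega> \<alpha> \<phi> u" and v: "is_pos_solution \<Omega> \<alpha> \<phi> v"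
    and max: "\<And>y. y \<in> \<Omega> \<Longrightarrow> u y - v y \<le> u x0 - v x0"
  shows "\<alpha> / u x0 \<le> \<alpha> / v x0"
proof -
  have du: "\<And>y. y \<in> \<Omega> \<Longrightarrow> u differentiable (at y)" and "grad u differentiable (at x0)"
    and dv: "\<And>y. y \<in> \<Omega> \<Longrightarrow> v differentiable (at y)" and "grad v differentiable (at x0)"
    using u v \<open>x0 \<in> \<Omega>\<close> by (auto simp: is_pos_solution_def C2_on_def)
  define Hu where "Hu = frechet_derivative (grad u) (at x0)"
  define Hv where "Hv = frechet_derivative (grad v) (at x0)"
  have "((\<lambda>y. grad u y - grad v y) has_derivative (\<lambda>h. Hu h - Hv h)) (at x0)"
    using \<open>grad u differentiable (at x0)\<close> \<open>grad v differentiable (at x0)\<close>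
    by (simp add: Hu_def Hv_def frechet_derivative_works)
  moreover have dw: "((\<lambda>y. u y - v y) has_derivative (\<lambda>h. (grad u y - grad v y) \<bullet> h)) (at y)"
    if "y \<in> \<Omega>" for y
    using has_derivative_diff[OF has_derivative_grad[OF du] has_derivative_grad[OF dv]] that
    by (simp add: inner_diff_left)
  ultimately have hess: "(Hu h - Hv h) \<bullet> h \<le> 0" for h
    using local_max_second_derivative_nonpos[OF \<open>open \<Omega>\<close> \<open>x0 \<in> \<Omega>\<close> dw _ max] by blast
  have "grad u x0 - grad v x0 = 0"
    using local_max_gradient_eq_0[OF \<open>open \<Omega>\<close> \<open>x0 \<in> \<Omega>\<close> dw[OF \<open>x0 \<in> \<Omega>\<close>] max] .
  then have "grad v x0 = grad u x0"
    by simp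
  have "norm (grad u x0) < 1" "norm (grad v x0) < 1"
    using u v \<open>x0 \<in> \<Omega>\<close> by (auto simp: is_pos_solution_def)
  define s where "s = sqrt (1 - (norm (grad u x0))\<^sup>2)"
  have "s > 0"
    using \<open>norm (grad u x0) < 1\<close> by (simp add: s_def abs_square_less_1)
  have "\<alpha> / (u x0 * s) = divergence (\<lambda>y. grad u y /\<^sub>R sqrt (1 - (norm (grad u y))\<^sup>2)) x0"
    using u \<open>x0 \<in> \<Omega>\<close> by (simp add: is_pos_solution_def s_def)
  also have "\<dots> \<le> divergence (\<lambda>y. grad v y /\<^sub>R sqrt (1 - (norm (grad v y))\<^sup>2)) x0"
    unfolding divergence_div_sqrt_1_minus_norm2_grad[OF \<open>grad u differentiable (at x0)\<close> \<open>norm (grad u x0) < 1\<close>]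
      divergence_div_sqrt_1_minus_norm2_grad[OF \<open>grad v differentiable (at x0)\<close> \<open>norm (grad v x0) < 1\<close>]
      \<open>grad v x0 = grad u x0\<close> Hu_def[symmetric] Hv_def[symmetric]
    using hess \<open>norm (grad u x0) < 1\<close>
    by (intro mean_curvature_operator_mono) (simp_all add: inner_diff_left abs_square_less_1)
  also have "\<dots> = \<alpha> / (v x0 * s)"
    using v \<open>x0 \<in> \<Omega>\<close> \<open>grad v x0 = grad u x0\<close> by (simp add: is_pos_solution_def s_def)
  finally show ?thesis
    using \<open>s > 0\<close> by (metis divide_divide_eq_left divide_le_cancel)
qed

lemma pos_solution_le:
  fixes \<Omega> :: "'a::euclidean_space set"
  assumes "open \<Omega>" and "\<Omega> \<noteq> {}" and "bounded \<Omega>" and "\<alpha> < 0"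
    and u: "is_pos_solution \<Omega> \<alpha> \<phi> u" and v: "is_pos_solution \<Omega> \<alpha> \<phi> v"
  shows "\<forall>x\<in>closure \<Omega>. u x \<le> v x"
proof -
  have "continuous_on (closure \<Omega>) (\<lambda>x. u x - v x)"
    using u v by (intro continuous_on_diff) (auto simp: is_pos_solution_def)
  obtain x0 where "x0 \<in> closure \<Omega>"
    and max: "\<And>y. y \<in> closure \<Omega> \<Longrightarrow> u y - v y \<le> u x0 - v x0"
    using continuous_attains_sup[OF compact_closure[THEN iffD2, OF \<open>bounded \<Omega>\<close>] _ \<open>continuous_on (closure \<Omega>) _\<close>]
      \<open>\<Omega> \<noteq> {}\<close>
    by auto
  show ?thesis
  proof (rule ccontr)
    assume "\<not> ?thesis"
    then have "u x0 > v x0"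
      using max by force
    have "x0 \<in> \<Omega>"
    proof (rule ccontr)
      assume "x0 \<notin> \<Omega>"
      then have "x0 \<in> frontier \<Omega>"
        using \<open>x0 \<in> closure \<Omega>\<close> \<open>open \<Omega>\<close> by (simp add: frontier_def interior_open)
      then show False
        using u v \<open>u x0 > v x0\<close> by (simp add: is_pos_solution_def)
    qed
    have "v x0 > 0"
      using v \<open>x0 \<in> \<Omega>\<close> by (simp add: is_pos_solution_def)
    have "\<alpha> / u x0 \<le> \<alpha> / v x0"
      using pos_solutions_at_interior_max[OF \<open>open \<Omega>\<close> \<open>x0 \<in> \<Omega>\<close> u v] max closure_subset by blast
    moreover have "\<alpha> / v x0 < \<alpha> / u x0"
      using \<open>\<alpha> < 0\<close> \<open>u x0 > v x0\<close> \<open>v x0 > 0\<close> by (simp add: divide_strict_left_mono_neg)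
    ultimately show False
      by simp
  qed
qed

theorem proposition4p4:
  fixes \<Omega> :: "'a::euclidean_space set"
    and \<alpha> :: real and \<phi> u v :: "'a \<Rightarrow> real"
  assumes "open \<Omega>" and "connected \<Omega>" and "\<Omega> \<noteq> {}" and "bounded \<Omega>"
    and "\<alpha> < 0"
    and "\<forall>x\<in>frontier \<Omega>. \<phi> x > 0"
    and "is_pos_solution \<Omega> \<alpha> \<phi> u"
    and "is_pos_solution \<Omega> \<alpha> \<phi> v"
  shows "\<forall>x\<in>closure \<Omega>. u x = v x"
  using pos_solution_le[OF assms(1,3,4,5,7,8)] pos_solution_le[OF assms(1,3,4,5,8,7)]
  by (auto intro: order.antisym)

end
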